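(* Let $\mathbb X$ be a separable reflexive Banach space, let $x_1,\ldots,x_k\in\mathbb X$, and let $\hat x_\ast$ be any minimizer of $y\mapsto\sum_{j=1}^k\|y-x_j\|$ over $y\in\mathrm{co}(x_1,\ldots,x_k)$, the convex hull of $\{x_1,\ldots,x_k\}$. Fix $\alpha\in(0,\tfrac12)$ and $r>0$, and set $C_\alpha=\frac{2(1-\alpha)}{1-2\alpha}$. If $z\in\mathrm{co}(x_1,\ldots,x_k)$ satisfies $\|\hat x_\ast-z\|>C_\alpha r$, then there exists $J\subseteq\{1,\ldots,k\}$ with $|J|>\alpha k$ such that $\|x_j-z\|>r$ for all $j\in J$. *)

theory Defs
  imports "HOL-Analysis.Analysis"
begin

definition separable_space :: "'a::real_normed_vector itself \<Rightarrow> bool" where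
  "separable_space _ \<longleftrightarrow> (\<exists>D::'a set. countable D \<and> closure D = UNIV)"

definition reflexive_space :: "'a::real_normed_vector itself \<Rightarrow> bool" where
  "reflexive_space _ \<longleftrightarrow>
     (\<forall>\<Phi> :: ('a \<Rightarrow>\<^sub>L real) \<Rightarrow>\<^sub>L real. \<exists>x::'a. \<forall>f. blinfun_apply \<Phi> f = blinfun_apply f x)"

end

theory Submission
  imports Defs
begin

(* Let D = norm (xhat - z) and split the indices into the set J of
   points far from z (distance > r) and the rest I.  For a near point x_j the
   triangle inequality gives  norm (xhat - x_j) - norm (z - x_j) >= D - 2r,  and
   for any point  norm (xhat - x_j) - norm (z - x_j) >= -D.  Summing and using
   that xhat does not have a larger distance sum than z yields the counting
   inequality  D (k - 2|J|) <= 2r (k - |J|).  If |J| <= alpha k with alpha < 1/2,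
   this forces  D (1 - 2 alpha) <= 2r (1 - alpha),  i.e. D <= C_alpha r. *)

lemma distance_gain_lower_bound:
  fixes xhat z y :: "'a::real_normed_vector"
  shows "- norm (xhat - z) \<le> norm (xhat - y) - norm (z - y)"
    and "norm (y - z) \<le> r \<Longrightarrow> norm (xhat - z) - 2 * r \<le> norm (xhat - y) - norm (z - y)"
proof -
  have tri_z: "norm (z - y) \<le> norm (z - xhat) + norm (xhat - y)"
    by (metis norm_triangle_ineq diff_add_cancel add_diff_eq)
  have tri_xhat: "norm (xhat - z) \<le> norm (xhat - y) + norm (y - z)"
    by (metis norm_triangle_ineq diff_add_cancel add_diff_eq)
  show "- norm (xhat - z) \<le> norm (xhat - y) - norm (z - y)"
    using tri_z by (simp add: norm_minus_commute)
  assume "norm (y - z) \<le> r"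
  then show "norm (xhat - z) - 2 * r \<le> norm (xhat - y) - norm (z - y)"
    using tri_xhat by (simp add: norm_minus_commute)
qed

lemma far_points_counting_inequality:
  fixes x :: "'i \<Rightarrow> 'a::real_normed_vector" and xhat z :: 'a and r :: real
  assumes K: "finite K"
    and no_worse: "(\<Sum>j\<in>K. norm (xhat - x j)) \<le> (\<Sum>j\<in>K. norm (z - x j))"
    and J_def: "J = {j\<in>K. r < norm (x j - z)}"
  shows "norm (xhat - z) * (real (card K) - 2 * real (card J))
           \<le> 2 * r * (real (card K) - real (card J))"
proof -
  define D where "D = norm (xhat - z)"
  define I where "I = K - J"
  define gain where "gain j = norm (xhat - x j) - norm (z - x j)" for j
  have J_sub: "J \<subseteq> K" and fin_J: "finite J" and fin_I: "finite I"
    using K by (auto simp: J_def I_def)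
  have card_I: "real (card I) = real (card K) - real (card J)"
    using J_sub fin_J K by (simp add: I_def card_Diff_subset card_mono of_nat_diff)
  have "(\<Sum>j\<in>K. gain j) \<le> 0"
    using no_worse by (simp add: gain_def sum_subtractf)
  moreover have "(\<Sum>j\<in>K. gain j) = (\<Sum>j\<in>I. gain j) + (\<Sum>j\<in>J. gain j)"
    using sum.subset_diff[OF J_sub K] by (simp add: I_def)
  moreover have "real (card I) * (D - 2 * r) \<le> (\<Sum>j\<in>I. gain j)"
  proof -
    have "D - 2 * r \<le> gain j" if "j \<in> I" for j
      using that distance_gain_lower_bound(2)[of "x j" z r xhat]
      by (auto simp: I_def J_def D_def gain_def not_less)
    then show ?thesis
      using sum_mono[of I "\<lambda>_. D - 2 * r" gain] by simp
  qed
  moreover have "real (card J) * (- D) \<le> (\<Sum>j\<in>J. gain j)"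
  proof -
    have "- D \<le> gain j" for j
      using distance_gain_lower_bound(1)[of xhat z "x j"] by (simp add: D_def gain_def)
    then show ?thesis
      using sum_mono[of J "\<lambda>_. - D" gain] by simp
  qed
  ultimately have "real (card I) * (D - 2 * r) - real (card J) * D \<le> 0"
    by linarith
  then show ?thesis
    by (simp add: card_I D_def algebra_simps)
qed

lemma counting_inequality_bounds_distance:
  fixes D r \<alpha> m n :: real
  assumes "0 < n" and "\<alpha> < 1/2" and "0 \<le> r"
    and few_far: "m \<le> \<alpha> * n"
    and counting: "D * (n - 2 * m) \<le> 2 * r * (n - m)"
  shows "D \<le> (2 * (1 - \<alpha>) / (1 - 2 * \<alpha>)) * r"
proof -
  have "\<alpha> * n < n / 2"
    using assms(1,2) by simp
  then have denom_pos: "0 < n - 2 * m"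
    using few_far by linarith
  have ratio: "(n - m) * (1 - 2 * \<alpha>) \<le> (1 - \<alpha>) * (n - 2 * m)"
    using few_far by (simp add: algebra_simps)
  have "D * (1 - 2 * \<alpha>) * (n - 2 * m) \<le> 2 * r * (n - m) * (1 - 2 * \<alpha>)"
    using mult_right_mono[OF counting, of "1 - 2 * \<alpha>"] assms(2) by (simp add: algebra_simps)
  also have "\<dots> \<le> 2 * r * (1 - \<alpha>) * (n - 2 * m)"
    using mult_left_mono[OF ratio, of "2 * r"] assms(3) by (simp add: algebra_simps)
  finally have "D * (1 - 2 * \<alpha>) \<le> 2 * r * (1 - \<alpha>)"
    using denom_pos by simp
  then show ?thesis
    using assms(2) by (simp add: field_simps)
qed

theorem mainTheorem3:
  fixes x :: "nat \<Rightarrow> 'a::banach" and k :: nat and xhat z :: 'a and \<alpha> r :: real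
  assumes "separable_space TYPE('a)"
    and "reflexive_space TYPE('a)"
    and "xhat \<in> convex hull (x ` {1..k})"
    and "\<forall>y \<in> convex hull (x ` {1..k}). (\<Sum>j=1..k. norm (xhat - x j)) \<le> (\<Sum>j=1..k. norm (y - x j))"
    and "0 < \<alpha>" and "\<alpha> < 1/2" and "0 < r"
    and "z \<in> convex hull (x ` {1..k})"
    and "norm (xhat - z) > (2 * (1 - \<alpha>) / (1 - 2 * \<alpha>)) * r"
  shows "\<exists>J \<subseteq> {1..k}. real (card J) > \<alpha> * real k \<and> (\<forall>j\<in>J. norm (x j - z) > r)"
proof (rule ccontr)
  assume no_large_far_set: "\<not> ?thesis"
  define J where "J = {j\<in>{1..k}. r < norm (x j - z)}"
  have few_far: "real (card J) \<le> \<alpha> * real k"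
  proof (rule ccontr)
    assume "\<not> real (card J) \<le> \<alpha> * real k"
    then have "\<alpha> * real k < real (card J)"
      by simp
    moreover have "J \<subseteq> {1..k}" and "\<forall>j\<in>J. r < norm (x j - z)"
      by (auto simp: J_def)
    ultimately show False
      using no_large_far_set by blast
  qed
  have "0 < k"
    using assms(8) by (cases k) auto
  moreover have "norm (xhat - z) * (real k - 2 * real (card J)) \<le> 2 * r * (real k - real (card J))"
    using far_points_counting_inequality[OF _ _ J_def] assms(4,8) by simp
  ultimately have "norm (xhat - z) \<le> (2 * (1 - \<alpha>) / (1 - 2 * \<alpha>)) * r"
    using counting_inequality_bounds_distance[OF _ assms(6) _ few_far] assms(7) by simp
  then show False
    using assms(9) by simp
qed

end
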